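(* Let $G=(V,E)$ be a finite graph with $n=|V|\ge 1$. Let $\mathrm{PCE}(G)$ be the minimum size of an edge set $S\subseteq E$ such that $(V,E\setminus S)$ admits a perfect code. Then $$\mathrm{PCE}(G)\le(\mathrm{mac}(G)-1)\,n\le 2\,\mathrm{PCE}(G).$$
   Context: A dominating set of $G$ is a set $D\subseteq V$ with $N[D]=V$, where $N[v]$ is the closed neighborhood. A perfect code is a dominating set $D$ with $|N[v]\cap D|=1$ for all $v\in V$ (deleting all edges always yields a graph with a perfect code, namely $V$, so $\mathrm{PCE}(G)$ is well defined). The average congestion of $S\subseteq V$ is $\overline{\mathrm{cong}}(S)=\frac{1}{|V|}\sum_{v\in V}|N[v]\cap S|$, and $\mathrm{mac}(G)$ is the minimum of $\overline{\mathrm{cong}}(D)$ over all dominating sets $D$ of $G$. *)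

theory Defs
  imports Main Complex_Main
begin

definition graph :: "'a set \<Rightarrow> 'a set set \<Rightarrow> bool" where
  "graph V E \<longleftrightarrow> finite V \<and> (\<forall>e\<in>E. e \<subseteq> V \<and> card e = 2)"

definition cnbh :: "'a set \<Rightarrow> 'a set set \<Rightarrow> 'a \<Rightarrow> 'a set" where
  "cnbh V E v = {v} \<union> {u \<in> V. {u, v} \<in> E}"

definition dominating :: "'a set \<Rightarrow> 'a set set \<Rightarrow> 'a set \<Rightarrow> bool" where
  "dominating V E D \<longleftrightarrow> D \<subseteq> V \<and> (\<Union>v\<in>D. cnbh V E v) = V"

definition perfect_code :: "'a set \<Rightarrow> 'a set set \<Rightarrow> 'a set \<Rightarrow> bool" where
  "perfect_code V E D \<longleftrightarrow> dominating V E D \<and> (\<forall>v\<in>V. card (cnbh V E v \<inter> D) = 1)"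

definition avg_cong :: "'a set \<Rightarrow> 'a set set \<Rightarrow> 'a set \<Rightarrow> real" where
  "avg_cong V E S = (\<Sum>v\<in>V. real (card (cnbh V E v \<inter> S))) / real (card V)"

definition mac :: "'a set \<Rightarrow> 'a set set \<Rightarrow> real" where
  "mac V E = Min {avg_cong V E D | D. dominating V E D}"

definition PCE :: "'a set \<Rightarrow> 'a set set \<Rightarrow> nat" where
  "PCE V E = Min {card S | S. S \<subseteq> E \<and> (\<exists>D. perfect_code V (E - S) D)}"

end

theory Submission
  imports Defs
begin

text \<open>Take a dominating set \<open>D\<close> of minimum average congestion and let every vertex keep the
  edge to one chosen dominator (itself if it lies in \<open>D\<close>), deleting its other edges into \<open>D\<close>.
  Then \<open>D\<close> is a perfect code and at most \<open>\<Sum>\<^sub>v (|N[v] \<inter> D| - 1) = (mac - 1) n\<close> edges were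
  deleted. Conversely, if deleting \<open>S\<close> leaves a perfect code \<open>D\<close>, then \<open>D\<close> dominates the original
  graph and every \<open>v\<close> sees at most \<open>1 + deg\<^sub>S v\<close> vertices of \<open>D\<close>, so by the handshake inequality
  \<open>(mac - 1) n \<le> \<Sum>\<^sub>v deg\<^sub>S v \<le> 2 |S|\<close>.\<close>

lemma finite_cnbh: "finite V \<Longrightarrow> finite (cnbh V E v)"
  unfolding cnbh_def by auto

lemma cnbh_subset: "v \<in> V \<Longrightarrow> cnbh V E v \<subseteq> V"
  unfolding cnbh_def by auto

lemma cnbh_mono: "E' \<subseteq> E \<Longrightarrow> cnbh V E' v \<subseteq> cnbh V E v"
  unfolding cnbh_def by auto

lemma cnbh_sym: "u \<in> V \<Longrightarrow> v \<in> V \<Longrightarrow> u \<in> cnbh V E v \<longleftrightarrow> v \<in> cnbh V E u"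
  unfolding cnbh_def by (auto simp: insert_commute)

lemma graph_finite_edges: "graph V E \<Longrightarrow> finite E"
  unfolding graph_def by (metis Pow_iff finite_Pow_iff finite_subset subsetI)

lemma dominating_refl: "dominating V E V"
  unfolding dominating_def cnbh_def by auto

lemma UN_cnbh_subset: "D \<subseteq> V \<Longrightarrow> (\<Union>v\<in>D. cnbh V E v) \<subseteq> V"
  unfolding cnbh_def by auto

lemma dominating_mono:
  assumes "E' \<subseteq> E" and "dominating V E' D"
  shows "dominating V E D"
proof -
  have D: "D \<subseteq> V" and cover: "(\<Union>v\<in>D. cnbh V E' v) = V"
    using assms(2) unfolding dominating_def by auto
  have "(\<Union>v\<in>D. cnbh V E' v) \<subseteq> (\<Union>v\<in>D. cnbh V E v)"
    by (intro UN_mono order_refl cnbh_mono assms(1))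
  with UN_cnbh_subset[OF D, of E] have "(\<Union>v\<in>D. cnbh V E v) = V"
    unfolding cover by (rule antisym)
  with D show ?thesis unfolding dominating_def by simp
qed

lemma dominating_cnbh_meets:
  assumes "dominating V E D" and "v \<in> V"
  shows "cnbh V E v \<inter> D \<noteq> {}"
proof -
  have "v \<in> (\<Union>a\<in>D. cnbh V E a)" using assms unfolding dominating_def by simp
  then obtain a where "a \<in> D" "v \<in> cnbh V E a" by blast
  moreover have "a \<in> V" using assms(1) \<open>a \<in> D\<close> unfolding dominating_def by blast
  ultimately have "a \<in> cnbh V E v \<inter> D" using cnbh_sym[OF assms(2)] by simp
  then show ?thesis by blast
qed

text \<open>Domination is automatic: a vertex seeing a codeword is seen by it.\<close>
lemma perfect_codeI:
  assumes "D \<subseteq> V" and "\<And>v. v \<in> V \<Longrightarrow> card (cnbh V E v \<inter> D) = 1"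
  shows "perfect_code V E D"
proof -
  have "V \<subseteq> (\<Union>a\<in>D. cnbh V E a)"
  proof
    fix v assume "v \<in> V"
    then obtain a where "cnbh V E v \<inter> D = {a}"
      using assms(2) card_1_singletonE by blast
    then have "a \<in> D" "v \<in> cnbh V E a"
      using cnbh_sym[OF _ \<open>v \<in> V\<close>] assms(1) by auto
    then show "v \<in> (\<Union>a\<in>D. cnbh V E a)" by blast
  qed
  with UN_cnbh_subset[OF assms(1)] have "(\<Union>a\<in>D. cnbh V E a) = V" by (rule antisym)
  with assms show ?thesis unfolding perfect_code_def dominating_def by simp
qed

lemma perfect_code_empty_edges: "perfect_code V {} V"
  by (rule perfect_codeI) (auto simp: cnbh_def)

lemma avg_cong_mult_card:
  "card V \<noteq> 0 \<Longrightarrow> avg_cong V E D * real (card V) = (\<Sum>v\<in>V. real (card (cnbh V E v \<inter> D)))"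
  unfolding avg_cong_def by simp

lemma finite_mac_candidates:
  "finite V \<Longrightarrow> finite {avg_cong V E D | D. dominating V E D}"
  by (rule finite_subset[of _ "avg_cong V E ` Pow V"]) (auto simp: dominating_def)

lemma mac_attained:
  assumes "finite V"
  obtains D where "dominating V E D" and "mac V E = avg_cong V E D"
proof -
  have "mac V E \<in> {avg_cong V E D | D. dominating V E D}"
    unfolding mac_def using finite_mac_candidates[OF assms] dominating_refl by (intro Min_in) auto
  then show ?thesis using that by blast
qed

lemma mac_le_avg_cong:
  "finite V \<Longrightarrow> dominating V E D \<Longrightarrow> mac V E \<le> avg_cong V E D"
  unfolding mac_def using finite_mac_candidates by (intro Min_le) auto

lemma finite_PCE_candidates:
  "finite E \<Longrightarrow> finite {card S | S. S \<subseteq> E \<and> (\<exists>D. perfect_code V (E - S) D)}"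
  by (rule finite_subset[of _ "card ` Pow E"]) auto

lemma PCE_attained:
  assumes "finite E"
  obtains S D where "S \<subseteq> E" and "perfect_code V (E - S) D" and "PCE V E = card S"
proof -
  have "perfect_code V (E - E) V" using perfect_code_empty_edges by simp
  then have "PCE V E \<in> {card S | S. S \<subseteq> E \<and> (\<exists>D. perfect_code V (E - S) D)}"
    unfolding PCE_def using finite_PCE_candidates[OF assms] by (intro Min_in) blast+
  then show ?thesis using that by blast
qed

lemma PCE_le_card:
  assumes "finite E" and "S \<subseteq> E" and "perfect_code V (E - S) D"
  shows "PCE V E \<le> card S"
  unfolding PCE_def using finite_PCE_candidates[OF assms(1)] assms(2,3) by (intro Min_le) auto

definition dominator_choice :: "'a set \<Rightarrow> 'a set set \<Rightarrow> 'a set \<Rightarrow> ('a \<Rightarrow> 'a) \<Rightarrow> bool" where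
  "dominator_choice V E D q \<longleftrightarrow> (\<forall>v\<in>V. q v \<in> cnbh V E v \<inter> D \<and> (v \<in> D \<longrightarrow> q v = v))"

definition surplus_edges :: "'a set \<Rightarrow> 'a set set \<Rightarrow> 'a set \<Rightarrow> ('a \<Rightarrow> 'a) \<Rightarrow> 'a set set" where
  "surplus_edges V E D q = (\<lambda>(v, a). {a, v}) ` (SIGMA v:V. cnbh V E v \<inter> D - {q v})"

lemma dominator_choice_exists:
  assumes "dominating V E D"
  obtains q where "dominator_choice V E D q"
proof
  let ?q = "\<lambda>v. if v \<in> D then v else SOME a. a \<in> cnbh V E v \<inter> D"
  show "dominator_choice V E D ?q"
    unfolding dominator_choice_def
  proof
    fix v assume "v \<in> V"
    then have "\<exists>a. a \<in> cnbh V E v \<inter> D" using dominating_cnbh_meets[OF assms] by blast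
    then have "(SOME a. a \<in> cnbh V E v \<inter> D) \<in> cnbh V E v \<inter> D" by (rule someI_ex)
    moreover have "v \<in> cnbh V E v" by (simp add: cnbh_def)
    ultimately show "?q v \<in> cnbh V E v \<inter> D \<and> (v \<in> D \<longrightarrow> ?q v = v)" by auto
  qed
qed

lemma surplus_edges_subset:
  assumes "dominator_choice V E D q"
  shows "surplus_edges V E D q \<subseteq> E"
proof
  fix e assume "e \<in> surplus_edges V E D q"
  then obtain v a where e: "e = {a, v}" and "v \<in> V" "a \<in> cnbh V E v" "a \<in> D" "a \<noteq> q v"
    unfolding surplus_edges_def by auto
  moreover have "a \<noteq> v" using assms \<open>v \<in> V\<close> \<open>a \<in> D\<close> \<open>a \<noteq> q v\<close>
    unfolding dominator_choice_def by auto
  ultimately show "e \<in> E" unfolding cnbh_def by auto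
qed

lemma cnbh_diff_surplus_edges:
  assumes q: "dominator_choice V E D q" and "D \<subseteq> V" and v: "v \<in> V"
  shows "cnbh V (E - surplus_edges V E D q) v \<inter> D = {q v}"
proof -
  let ?S = "surplus_edges V E D q"
  have qv: "q v \<in> cnbh V E v" "q v \<in> D" "v \<in> D \<Longrightarrow> q v = v"
    using q v unfolding dominator_choice_def by auto
  have "{q v, v} \<notin> ?S" if "v \<notin> D"
  proof
    assume "{q v, v} \<in> ?S"
    then obtain w a where eq: "{q v, v} = {a, w}" and "a \<in> D" "a \<noteq> q w"
      unfolding surplus_edges_def by auto
    with \<open>v \<notin> D\<close> have "a = q v" "w = v" by (auto simp: doubleton_eq_iff)
    with \<open>a \<noteq> q w\<close> show False by simp
  qed
  then have "q v \<in> cnbh V (E - ?S) v" using qv cnbh_subset[OF v] unfolding cnbh_def by auto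
  moreover have "a = q v" if "a \<in> cnbh V (E - ?S) v" "a \<in> D" for a
  proof (rule ccontr)
    assume "a \<noteq> q v"
    then have "{a, v} \<in> ?S"
      using that v cnbh_mono[of "E - ?S" E V v] unfolding surplus_edges_def by force
    moreover have "a \<noteq> v" using \<open>a \<noteq> q v\<close> qv(3) \<open>a \<in> D\<close> by auto
    ultimately show False using that(1) unfolding cnbh_def by auto
  qed
  ultimately show ?thesis using qv(2) by blast
qed

lemma perfect_code_diff_surplus_edges:
  assumes "dominator_choice V E D q" and "D \<subseteq> V"
  shows "perfect_code V (E - surplus_edges V E D q) D"
  using assms by (intro perfect_codeI) (simp_all add: cnbh_diff_surplus_edges)

lemma card_surplus_edges:
  assumes "finite V" and q: "dominator_choice V E D q"
  shows "card (surplus_edges V E D q) + card V \<le> (\<Sum>v\<in>V. card (cnbh V E v \<inter> D))"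
proof -
  have fin: "finite (cnbh V E v \<inter> D)" for v using finite_cnbh[OF assms(1)] by blast
  have "card (surplus_edges V E D q) \<le> card (SIGMA v:V. cnbh V E v \<inter> D - {q v})"
    unfolding surplus_edges_def using assms(1) fin by (intro card_image_le) auto
  also have "\<dots> = (\<Sum>v\<in>V. card (cnbh V E v \<inter> D - {q v}))"
    using assms(1) fin by (simp add: card_SigmaI)
  finally have "card (surplus_edges V E D q) + card V \<le> (\<Sum>v\<in>V. Suc (card (cnbh V E v \<inter> D - {q v})))"
    by (simp add: sum_Suc)
  also have "\<dots> = (\<Sum>v\<in>V. card (cnbh V E v \<inter> D))"
  proof (rule sum.cong[OF refl])
    fix v assume "v \<in> V"
    then have "q v \<in> cnbh V E v \<inter> D" using q unfolding dominator_choice_def by blast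
    then show "Suc (card (cnbh V E v \<inter> D - {q v})) = card (cnbh V E v \<inter> D)"
      using fin by (rule card_Suc_Diff1[rotated])
  qed
  finally show ?thesis .
qed

lemma card_cnbh_inter_le_degree:
  assumes "finite V" and "perfect_code V (E - S) D" and "v \<in> V"
  shows "card (cnbh V E v \<inter> D) \<le> 1 + card {u \<in> V. {u, v} \<in> S}"
proof -
  have "D \<subseteq> V" using assms(2) unfolding perfect_code_def dominating_def by blast
  then have "cnbh V E v \<inter> D \<subseteq> (cnbh V (E - S) v \<inter> D) \<union> {u \<in> V. {u, v} \<in> S}"
    unfolding cnbh_def by auto
  then have "card (cnbh V E v \<inter> D) \<le> card ((cnbh V (E - S) v \<inter> D) \<union> {u \<in> V. {u, v} \<in> S})"
    using assms(1) by (intro card_mono) (auto intro: finite_cnbh)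
  also have "\<dots> \<le> card (cnbh V (E - S) v \<inter> D) + card {u \<in> V. {u, v} \<in> S}"
    by (rule card_Un_le)
  also have "card (cnbh V (E - S) v \<inter> D) = 1"
    using assms(2,3) unfolding perfect_code_def by blast
  finally show ?thesis .
qed

lemma doubleton_preimage_finite_card_le:
  "finite {(u, v). {u, v} = e} \<and> card {(u, v). {u, v} = e} \<le> 2"
proof (cases "\<exists>a b. {a, b} = e")
  case True
  then obtain a b where e: "e = {a, b}" by auto
  have sub: "{(u, v). {u, v} = e} \<subseteq> {(a, b), (b, a)}"
    unfolding e by (auto simp: doubleton_eq_iff)
  have "card {(u, v). {u, v} = e} \<le> card {(a, b), (b, a)}"
    using sub by (rule card_mono[rotated]) simp
  also have "\<dots> \<le> 2" by (simp add: card_insert_le_m1)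
  finally show ?thesis using sub finite_subset by blast
qed simp

lemma sum_degree_le:
  assumes "finite V" and "finite S"
  shows "(\<Sum>v\<in>V. card {u \<in> V. {u, v} \<in> S}) \<le> 2 * card S"
proof -
  have "(SIGMA v:V. {u \<in> V. {u, v} \<in> S}) \<subseteq> (\<Union>e\<in>S. {(u, v). {u, v} = e})"
    by (auto simp: insert_commute)
  then have "card (SIGMA v:V. {u \<in> V. {u, v} \<in> S}) \<le> card (\<Union>e\<in>S. {(u, v). {u, v} = e})"
    using assms(2) doubleton_preimage_finite_card_le by (intro card_mono) auto
  also have "\<dots> \<le> (\<Sum>e\<in>S. card {(u, v). {u, v} = e})"
    using assms(2) by (rule card_UN_le)
  also have "\<dots> \<le> (\<Sum>e\<in>S. 2)"
    using doubleton_preimage_finite_card_le by (intro sum_mono) blast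
  also have "\<dots> = 2 * card S" by simp
  finally show ?thesis using assms(1) by (simp add: card_SigmaI)
qed

lemma PCE_le_excess_congestion:
  assumes "finite V" and "card V \<noteq> 0" and "finite E"
  shows "real (PCE V E) \<le> (mac V E - 1) * real (card V)"
proof -
  obtain D where D: "dominating V E D" and mac_D: "mac V E = avg_cong V E D"
    using mac_attained[OF assms(1)] .
  obtain q where q: "dominator_choice V E D q" using dominator_choice_exists[OF D] .
  have "D \<subseteq> V" using D unfolding dominating_def by blast
  then have "PCE V E \<le> card (surplus_edges V E D q)"
    by (rule PCE_le_card[OF assms(3) surplus_edges_subset[OF q] perfect_code_diff_surplus_edges[OF q]])
  with card_surplus_edges[OF assms(1) q] have "PCE V E + card V \<le> (\<Sum>v\<in>V. card (cnbh V E v \<inter> D))"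
    by linarith
  then have "real (PCE V E) + real (card V) \<le> (\<Sum>v\<in>V. real (card (cnbh V E v \<inter> D)))"
    by (metis of_nat_add of_nat_le_iff of_nat_sum)
  then show ?thesis
    unfolding mac_D left_diff_distrib avg_cong_mult_card[OF assms(2)] by simp
qed

lemma excess_congestion_le_twice_PCE:
  assumes "finite V" and "card V \<noteq> 0" and "finite E"
  shows "(mac V E - 1) * real (card V) \<le> 2 * real (PCE V E)"
proof -
  obtain S D where S: "S \<subseteq> E" and pc: "perfect_code V (E - S) D" and PCE_S: "PCE V E = card S"
    using PCE_attained[OF assms(3)] .
  have D: "dominating V E D"
    using pc dominating_mono[of "E - S" E V D] unfolding perfect_code_def by blast
  have "(\<Sum>v\<in>V. card (cnbh V E v \<inter> D)) \<le> (\<Sum>v\<in>V. 1 + card {u \<in> V. {u, v} \<in> S})"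
    using card_cnbh_inter_le_degree[OF assms(1) pc] by (rule sum_mono)
  also have "\<dots> = card V + (\<Sum>v\<in>V. card {u \<in> V. {u, v} \<in> S})"
    by (simp add: sum_Suc)
  also have "\<dots> \<le> card V + 2 * PCE V E"
    using sum_degree_le[OF assms(1) finite_subset[OF S assms(3)]] PCE_S by simp
  finally have sum_le: "(\<Sum>v\<in>V. real (card (cnbh V E v \<inter> D))) \<le> real (card V) + 2 * real (PCE V E)"
    by (simp flip: of_nat_sum)
  have "mac V E * real (card V) \<le> avg_cong V E D * real (card V)"
    using mac_le_avg_cong[OF assms(1) D] by (simp add: mult_right_mono)
  with sum_le show ?thesis
    unfolding avg_cong_mult_card[OF assms(2)] by (simp add: left_diff_distrib)
qed

theorem mainTheorem4:
  fixes V :: "'a set" and E :: "'a set set"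
  assumes "graph V E" and "card V \<ge> 1"
  shows "real (PCE V E) \<le> (mac V E - 1) * real (card V)
       \<and> (mac V E - 1) * real (card V) \<le> 2 * real (PCE V E)"
proof -
  have "finite V" "card V \<noteq> 0" "finite E"
    using assms graph_finite_edges unfolding graph_def by auto
  then show ?thesis using PCE_le_excess_congestion excess_congestion_le_twice_PCE by blast
qed

end
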